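(* For the merging problem with $n$ items and $k$ slots, let $0<\epsilon<1$ and suppose $n\ge k^2/\epsilon+k$ and the ad values $a_1,\dots,a_n$ are i.i.d. with a common (regular) distribution supported on $[0,\infty)$, and $o_i\ge0$. Then the G-FIX mechanism is $(1-\epsilon)$-approximate: $\mathrm{OBJ}(\mathcal M^F)\ge(1-\epsilon)\mathrm{OBJ}(\mathcal M^* )$.
   Context: Merging problem: $n$ items indexed by $[n]$, $k\le n$ slots. Each item $i$ has a random ad value $a_i$, drawn independently from a regular distribution $G_i$ ($\boldsymbol a\sim G=\times_i G_i$), and a fixed organic value $o_i\ge0$. A mechanism is a pair of allocation rules $x,y$ with $x_i(\boldsymbol a),y_i(\boldsymbol a)\in\{0,1\}$ ($x_i=1$: item $i$ shown as ad; $y_i=1$: shown organically) satisfying for all $\boldsymbol a,i$: (i) $\sum_i(x_i+y_i)\le k$; (ii) $x_i+y_i\le 1$; (iii) $y_i(a_i,\boldsymbol a_{-i})$ independent of $a_i$; (iv) $x_i(a_i,\boldsymbol a_{-i})$ non-decreasing in $a_i$. Objective $\mathrm{OBJ}=\mathbb E_{\boldsymbol a\sim G}[\sum_i(a_ix_i(\boldsymbol a)+o_iy_i(\boldsymbol a))]$; $\mathcal M^*$ maximizes it subject to (i)–(iv). A mechanism $\mathcal M$ is $\tau$-approximate if $\mathrm{OBJ}(\mathcal M)/\mathrm{OBJ}(\mathcal M^* )\ge\tau$. Notation: for a finite multiset $S$ of reals and $k\le|S|$, $\max^{(k)}S$ is the sum of the $k$ largest elements of $S$. G-FIX-$I$ mechanism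 $\mathcal M^F_I$ for $I\subseteq[n]$: items in $I$ may only be shown in organic form and items outside $I$ only as ads; with $L=\{o_i:i\in I\}\cup\{a_i:i\in[n]\setminus I\}$, it displays (in the designated forms) the $k$ items with the largest values in $L$. Its objective is $\mathrm{OBJ}(\mathcal M_I^F)=\mathbb E_{\boldsymbol a\sim G}[\max^{(k)}L]$. The G-FIX mechanism $\mathcal M^F$ runs the $\mathcal M^F_I$ with the highest objective among all $I\subseteq[n]$ with $|I|\le k$, so $\mathrm{OBJ}(\mathcal M^F)=\max_{I\subseteq[n],|I|\le k}\mathrm{OBJ}(\mathcal M^F_I)$. *)

theory Defs
  imports "HOL-Analysis.Analysis" "HOL-Probability.Probability" "HOL-Library.Multiset"
begin

text \<open>Items are indexed by 0..<n; an ad-value profile is a function nat => real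
  (only the values at i < n matter).  All ad values are i.i.d. with law D.\<close>

definition regular_dist :: "real measure \<Rightarrow> bool" where
  "regular_dist D \<longleftrightarrow>
     (\<exists>f. f \<in> borel_measurable borel \<and> (\<forall>x. 0 \<le> f x) \<and>
          D = density lborel (\<lambda>x. ennreal (f x)) \<and>
          mono_on {x. 0 < f x} (\<lambda>v. v - (1 - measure D {..v}) / f v))"

definition prof_dist :: "real measure \<Rightarrow> nat \<Rightarrow> (nat \<Rightarrow> real) measure" where
  "prof_dist D n = PiM {..<n} (\<lambda>_. D)"

text \<open>Feasibility constraints (i)-(iv) of a mechanism (x, y).\<close>
definition feasible_mech ::
  "nat \<Rightarrow> nat \<Rightarrow> ((nat \<Rightarrow> real) \<Rightarrow> nat \<Rightarrow> bool) \<Rightarrow> ((nat \<Rightarrow> real) \<Rightarrow> nat \<Rightarrow> bool) \<Rightarrow> bool" where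
  "feasible_mech n k x y \<longleftrightarrow>
     (\<forall>a \<in> PiE {..<n} (\<lambda>_. UNIV).
        (\<Sum>i<n. of_bool (x a i) + of_bool (y a i)) \<le> (k::nat) \<and>
        (\<forall>i<n. of_bool (x a i) + of_bool (y a i) \<le> (1::nat)) \<and>
        (\<forall>i<n. \<forall>s t. y (a(i := s)) i = y (a(i := t)) i) \<and>
        (\<forall>i<n. \<forall>s t. s \<le> t \<longrightarrow> x (a(i := s)) i \<longrightarrow> x (a(i := t)) i))"

definition mech_obj ::
  "real measure \<Rightarrow> nat \<Rightarrow> (nat \<Rightarrow> real) \<Rightarrow> ((nat \<Rightarrow> real) \<Rightarrow> nat \<Rightarrow> bool) \<Rightarrow> ((nat \<Rightarrow> real) \<Rightarrow> nat \<Rightarrow> bool) \<Rightarrow> ennreal" where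
  "mech_obj D n ov x y =
     (\<integral>\<^sup>+ a. ennreal (\<Sum>i<n. (if x a i then a i else 0) + (if y a i then ov i else 0)) \<partial>prof_dist D n)"

definition opt_obj :: "real measure \<Rightarrow> nat \<Rightarrow> nat \<Rightarrow> (nat \<Rightarrow> real) \<Rightarrow> ennreal" where
  "opt_obj D n k ov = (SUP xy \<in> {(x, y). feasible_mech n k x y}. mech_obj D n ov (fst xy) (snd xy))"

definition max_k :: "nat \<Rightarrow> real multiset \<Rightarrow> real" where
  "max_k k S = sum_list (take k (rev (sorted_list_of_multiset S)))"

definition fix_obj :: "real measure \<Rightarrow> nat \<Rightarrow> nat \<Rightarrow> (nat \<Rightarrow> real) \<Rightarrow> nat set \<Rightarrow> ennreal" where
  "fix_obj D n k ov I =
     (\<integral>\<^sup>+ a. ennreal (max_k k (image_mset (\<lambda>i. if i \<in> I then ov i else a i) (mset_set {..<n})))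
       \<partial>prof_dist D n)"

definition gfix_obj :: "real measure \<Rightarrow> nat \<Rightarrow> nat \<Rightarrow> (nat \<Rightarrow> real) \<Rightarrow> ennreal" where
  "gfix_obj D n k ov = Max {fix_obj D n k ov I | I. I \<subseteq> {..<n} \<and> card I \<le> k}"

end

theory Submission
  imports Defs
begin

text \<open>
  Let \<open>T\<close> be a set of \<open>k\<close> items with the largest organic values; we compare an arbitrary feasible
  mechanism with the G-FIX-\<open>T\<close> mechanism.  At a profile \<open>a\<close> the mechanism shows ads \<open>X\<close> and
  organic items \<open>Y\<close> with \<open>|X| + |Y| \<le> k\<close>, and \<open>Y\<close> can be traded for a subset of \<open>T\<close> of the same
  size and no smaller organic value.  Take \<open>m \<ge> 1/\<epsilon>\<close> permutations \<open>\<sigma>\<^sub>r\<close> of the items that map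
  \<open>T\<close> onto pairwise disjoint sets; this is where \<open>n \<ge> k\<^sup>2/\<epsilon> + k\<close> enters.  As the ad values are
  i.i.d., relabelling a profile by \<open>\<sigma>\<^sub>r\<close> preserves its law, and in the relabelled profile the
  ads of \<open>X\<close> outside \<open>\<sigma>\<^sub>r T\<close> together with the traded organic items are a feasible choice
  for G-FIX-\<open>T\<close>.  Summing over \<open>r\<close>, disjointness costs at most one copy of the ad value of
  \<open>X\<close>, so \<open>m OBJ(G-FIX-T) \<ge> (m - 1) OBJ(M) \<ge> m (1 - \<epsilon>) OBJ(M)\<close>.

  Only the capacity constraint (i) and the exchangeability of the ad values are used.
\<close>

lemma sum_mset_le_sum_take:
  fixes xs :: "real list"
  assumes "sorted_wrt (\<ge>) xs" and "N \<subseteq># mset xs" and "size N \<le> k" and "\<forall>x\<in>set xs. 0 \<le> x"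
  shows "sum_mset N \<le> sum_list (take k xs)"
  using assms
proof (induction xs arbitrary: N k)
  case Nil
  then show ?case by simp
next
  case (Cons x xs)
  show ?case
  proof (cases "N = {#}")
    case True
    have "0 \<le> sum_list (take k (x # xs))"
      using Cons.prems(4) by (intro sum_list_nonneg) (meson in_set_takeD)
    then show ?thesis using True by simp
  next
    case False
    then obtain k' where k: "k = Suc k'"
      using Cons.prems(3) by (cases k) auto
    obtain y where y: "y \<in># N" "N - {#y#} \<subseteq># mset xs"
    proof (cases "x \<in># N")
      case True
      then show ?thesis
        using that[of x] Cons.prems(2) by (simp add: subset_eq_diff_conv)
    next
      case False
      then have "N \<subseteq># mset xs"
        using Cons.prems(2) by (metis Diff_eq_empty_iff_mset minus_add_mset_if_not_in_lhs mset.simps(2))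
      then show ?thesis
        using that \<open>N \<noteq> {#}\<close> by (meson diff_subset_eq_self multiset_nonemptyE subset_mset.order_trans)
    qed
    have "y \<in> set (x # xs)"
      using Cons.prems(2) y(1) by (metis mset_subset_eqD set_mset_mset)
    then have "y \<le> x"
      using Cons.prems(1) by auto
    moreover have "sum_mset (N - {#y#}) \<le> sum_list (take k' xs)"
      using Cons.IH[OF _ y(2)] Cons.prems k y(1) by (simp add: size_Diff_singleton)
    ultimately show ?thesis
      using y(1) k by (simp add: sum_mset.remove[of y N])
  qed
qed

lemma sum_le_max_k:
  fixes g :: "'a \<Rightarrow> real"
  assumes "finite A" and "S \<subseteq> A" and "card S \<le> k" and "\<forall>i\<in>A. 0 \<le> g i"
  shows "sum g S \<le> max_k k (image_mset g (mset_set A))"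
proof -
  define xs where "xs = rev (sorted_list_of_multiset (image_mset g (mset_set A)))"
  have "sorted_wrt (\<ge>) xs"
    unfolding xs_def sorted_wrt_rev by (simp flip: sorted_wrt_iff_nth_less)
  moreover have "image_mset g (mset_set S) \<subseteq># mset xs"
    using assms(1,2) by (simp add: xs_def image_mset_subseteq_mono msubset_mset_set_iff finite_subset)
  moreover have "\<forall>x\<in>set xs. 0 \<le> x"
    using assms(1,4) by (auto simp: xs_def)
  ultimately have "sum_mset (image_mset g (mset_set S)) \<le> sum_list (take k xs)"
    using assms(3) by (intro sum_mset_le_sum_take) auto
  then show ?thesis
    by (simp add: max_k_def xs_def sum_unfold_sum_mset)
qed

text \<open>A sorting-free stand-in for \<^const>\<open>max_k\<close>, whose measurability is immediate.\<close>

definition best_k_sum :: "nat \<Rightarrow> 'a set \<Rightarrow> ('a \<Rightarrow> real) \<Rightarrow> real" where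
  "best_k_sum k A g = Max ((\<lambda>S. sum g S) ` {S. S \<subseteq> A \<and> card S \<le> k})"

lemma sum_le_best_k_sum:
  assumes "finite A" and "S \<subseteq> A" and "card S \<le> k"
  shows "sum g S \<le> best_k_sum k A g"
  unfolding best_k_sum_def using assms by (intro Max_ge) auto

lemma best_k_sum_nonneg: "finite A \<Longrightarrow> 0 \<le> best_k_sum k A g"
  using sum_le_best_k_sum[of A "{}"] by simp

lemma best_k_sum_le_max_k:
  assumes "finite A" and "\<forall>i\<in>A. 0 \<le> g i"
  shows "best_k_sum k A g \<le> max_k k (image_mset g (mset_set A))"
  unfolding best_k_sum_def using assms
  by (subst Max_le_iff) (auto intro: sum_le_max_k)

lemma best_k_sum_cong: "(\<And>i. i \<in> A \<Longrightarrow> g i = h i) \<Longrightarrow> best_k_sum k A g = best_k_sum k A h"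
  unfolding best_k_sum_def by (intro arg_cong[where f = Max] image_cong refl sum.cong) auto

lemma borel_measurable_best_k_sum:
  assumes "finite A" and "\<And>i. i \<in> A \<Longrightarrow> (\<lambda>x. g x i) \<in> borel_measurable M"
  shows "(\<lambda>x. best_k_sum k A (g x)) \<in> borel_measurable M"
  unfolding best_k_sum_def using assms
  by (intro borel_measurable_Max) (auto intro!: borel_measurable_sum)

lemma exists_top_subset:
  fixes f :: "'a \<Rightarrow> 'b::linorder"
  assumes "finite A" and "j \<le> card A"
  obtains T where "T \<subseteq> A" and "card T = j" and "\<And>t u. t \<in> T \<Longrightarrow> u \<in> A - T \<Longrightarrow> f u \<le> f t"
  using assms(2)
proof (induction j arbitrary: thesis)
  case 0
  then show ?case by (metis card.empty empty_iff empty_subsetI)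
next
  case (Suc j)
  then obtain T where T: "T \<subseteq> A" "card T = j" "\<And>t u. t \<in> T \<Longrightarrow> u \<in> A - T \<Longrightarrow> f u \<le> f t"
    by (metis Suc_leD)
  have "finite (A - T)"
    using assms(1) by simp
  moreover have "A - T \<noteq> {}"
  proof
    assume "A - T = {}"
    then have "card A \<le> card T"
      using T(1) assms(1) by (intro card_mono) (auto intro: finite_subset)
    then show False
      using T(2) Suc.prems(2) by simp
  qed
  ultimately obtain v where v: "v \<in> A - T" "Max (f ` (A - T)) = f v"
    by (rule obtains_MAX)
  have v_max: "f u \<le> f v" if "u \<in> A - T" for u
    using Max_ge[of "f ` (A - T)" "f u"] v(2) that \<open>finite (A - T)\<close> by simp
  show ?case
  proof (rule Suc.prems(1))
    show "insert v T \<subseteq> A" and "card (insert v T) = Suc j"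
      using T(1,2) v(1) assms(1) by (auto simp: finite_subset)
    show "f u \<le> f t" if "t \<in> insert v T" and "u \<in> A - insert v T" for t u
      using that T(3) v(1) v_max by auto
  qed
qed

lemma sum_le_sum_of_dominated:
  fixes f :: "'a \<Rightarrow> 'b::ordered_comm_monoid_add"
  assumes "finite B" and "card B \<le> card C" and "\<And>b c. b \<in> B \<Longrightarrow> c \<in> C \<Longrightarrow> f b \<le> f c"
  obtains C' where "C' \<subseteq> C" and "card C' = card B" and "sum f B \<le> sum f C'"
proof -
  obtain C' where C': "C' \<subseteq> C" "card C' = card B" "finite C'"
    using obtain_subset_with_card_n[OF assms(2)] .
  then obtain e where e: "bij_betw e B C'"
    using finite_same_card_bij[OF assms(1)] by metis
  have "sum f B \<le> sum (f \<circ> e) B"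
    using e C'(1) by (auto simp: bij_betw_def intro!: sum_mono assms(3))
  also have "\<dots> = sum f C'"
    using sum.reindex_bij_betw[OF e] by simp
  finally show ?thesis
    using that C'(1,2) by blast
qed

lemma sum_le_sum_subset_of_top:
  fixes f :: "'a \<Rightarrow> 'b::ordered_comm_monoid_add"
  assumes "finite A" and "T \<subseteq> A" and "\<And>t u. t \<in> T \<Longrightarrow> u \<in> A - T \<Longrightarrow> f u \<le> f t"
    and "Y \<subseteq> A" and "card Y \<le> card T"
  obtains Y' where "Y' \<subseteq> T" and "card Y' = card Y" and "sum f Y \<le> sum f Y'"
proof -
  have fin: "finite T" "finite Y"
    using assms(1,2,4) finite_subset by auto
  have "card (Y \<inter> T) + card (Y - T) \<le> card (T \<inter> Y) + card (T - Y)"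
    using assms(5) fin by (simp flip: card_Int_Diff)
  then have "card (Y - T) \<le> card (T - Y)"
    by (simp add: Int_commute)
  then obtain C where C: "C \<subseteq> T - Y" "card C = card (Y - T)" "sum f (Y - T) \<le> sum f C"
    using sum_le_sum_of_dominated[of "Y - T" "T - Y" f] fin assms(3,4) by blast
  have disj: "(Y \<inter> T) \<inter> C = {}" and finC: "finite C"
    using C(1) fin finite_subset by auto
  show ?thesis
  proof (rule that)
    show "Y \<inter> T \<union> C \<subseteq> T"
      using C(1) by blast
    show "card (Y \<inter> T \<union> C) = card Y"
      using C(2) disj finC fin by (simp add: card_Un_disjoint card_Int_Diff[of Y T])
    have "sum f Y = sum f (Y \<inter> T) + sum f (Y - T)"
      using fin(2) by (rule sum.Int_Diff)
    also have "\<dots> \<le> sum f (Y \<inter> T) + sum f C"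
      using C(3) by (rule add_left_mono)
    also have "\<dots> = sum f (Y \<inter> T \<union> C)"
      using disj finC fin by (simp add: sum.union_disjoint)
    finally show "sum f Y \<le> sum f (Y \<inter> T \<union> C)" .
  qed
qed

lemma exists_bij_betw_image_eq:
  assumes "finite A" and "T \<subseteq> A" and "R \<subseteq> A" and "card T = card R"
  obtains \<sigma> where "bij_betw \<sigma> A A" and "\<sigma> ` T = R"
proof -
  have fin: "finite T" "finite R"
    using assms(1-3) finite_subset by auto
  obtain f where f: "bij_betw f T R"
    using finite_same_card_bij[OF fin assms(4)] by blast
  have "card (A - T) = card (A - R)"
    using assms fin by (simp add: card_Diff_subset)
  then obtain g where g: "bij_betw g (A - T) (A - R)"
    using finite_same_card_bij[of "A - T" "A - R"] assms(1) by auto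
  define \<sigma> where "\<sigma> i = (if i \<in> T then f i else g i)" for i
  have "bij_betw \<sigma> T R"
    using f by (rule bij_betw_cong[THEN iffD1, rotated]) (simp add: \<sigma>_def)
  moreover have "bij_betw \<sigma> (A - T) (A - R)"
    using g by (rule bij_betw_cong[THEN iffD1, rotated]) (simp add: \<sigma>_def)
  ultimately have "bij_betw \<sigma> (T \<union> (A - T)) (R \<union> (A - R))"
    by (rule bij_betw_combine) blast
  moreover have "T \<union> (A - T) = A" and "R \<union> (A - R) = A"
    using assms(2,3) by auto
  ultimately show ?thesis
    using that \<open>bij_betw \<sigma> T R\<close> by (metis bij_betw_imp_surj_on)
qed

lemma exists_disjoint_subsets_of_card:
  assumes "m * k \<le> n"
  obtains R where "disjoint_family_on R {..<m}"
    and "\<And>r. r < m \<Longrightarrow> R r \<subseteq> {..<n}" and "\<And>r. r < m \<Longrightarrow> card (R r) = k"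
proof
  have "i div k = r" if "i \<in> {r * k..<r * k + k}" for i r
    using that by (intro div_nat_eqI) (auto simp: algebra_simps)
  then show "disjoint_family_on (\<lambda>r. {r * k..<r * k + k}) {..<m}"
    unfolding disjoint_family_on_def by blast
  show "{r * k..<r * k + k} \<subseteq> {..<n}" if "r < m" for r
  proof -
    have "r * k + k \<le> m * k"
      using that by (metis Suc_leI add.commute mult_Suc mult_le_mono1)
    then show ?thesis
      using assms by auto
  qed
qed simp

lemma sum_sum_Diff_disjoint_family_ge:
  fixes a :: "'a \<Rightarrow> real"
  assumes "finite X" and "finite I" and "disjoint_family_on R I" and "\<And>i. i \<in> X \<Longrightarrow> 0 \<le> a i"
  shows "(real (card I) - 1) * sum a X \<le> (\<Sum>r\<in>I. sum a (X - R r))"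
proof -
  have "(\<Sum>r\<in>I. sum a (X \<inter> R r)) = sum a (\<Union>r\<in>I. X \<inter> R r)"
    using assms(1-3) by (intro sum.UNION_disjoint[symmetric]) (auto simp: disjoint_family_on_def)
  also have "\<dots> \<le> sum a X"
    using assms(1,4) by (intro sum_mono2) auto
  finally have "(\<Sum>r\<in>I. sum a (X \<inter> R r)) \<le> sum a X" .
  moreover have "(\<Sum>r\<in>I. sum a (X - R r)) = (\<Sum>r\<in>I. sum a X - sum a (X \<inter> R r))"
    using sum.Int_Diff[OF assms(1), of a] by (intro sum.cong) (simp_all add: algebra_simps)
  ultimately show ?thesis
    by (simp add: sum_subtractf algebra_simps)
qed

lemma sum_Diff_add_sum_le_best_k_sum:
  fixes a b :: "'a \<Rightarrow> real"
  assumes "finite A" and "bij_betw \<sigma> A A" and "T \<subseteq> A"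
    and "X \<subseteq> A" and "Y \<subseteq> T" and "card X + card Y \<le> k"
  shows "sum a (X - \<sigma> ` T) + sum b Y \<le> best_k_sum k A (\<lambda>i. if i \<in> T then b i else a (\<sigma> i))"
    (is "_ \<le> best_k_sum k A ?g")
proof -
  define B where "B = {i \<in> A. \<sigma> i \<in> X - \<sigma> ` T}"
  have "X - \<sigma> ` T \<subseteq> \<sigma> ` A"
    using assms(2,4) by (auto simp: bij_betw_def)
  then have img: "\<sigma> ` B = X - \<sigma> ` T"
    unfolding B_def by fast
  have bij: "bij_betw \<sigma> B (X - \<sigma> ` T)"
    using bij_betw_subset[OF assms(2) _ img] unfolding B_def by blast
  have disj: "B \<inter> Y = {}"
    using assms(5) unfolding B_def by blast
  have fin: "finite B" "finite Y"
    using assms(1,3,5) unfolding B_def by (auto intro: finite_subset)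
  have "sum a (X - \<sigma> ` T) = sum (a \<circ> \<sigma>) B"
    using sum.reindex_bij_betw[OF bij, of a] by simp
  also have "\<dots> = sum ?g B"
    unfolding B_def by (intro sum.cong) auto
  finally have "sum a (X - \<sigma> ` T) + sum b Y = sum ?g (B \<union> Y)"
    using assms(5) disj fin by (simp add: sum.union_disjoint subset_iff)
  also have "\<dots> \<le> best_k_sum k A ?g"
  proof (rule sum_le_best_k_sum)
    show "B \<union> Y \<subseteq> A"
      using assms(3,5) unfolding B_def by blast
    have "card (B \<union> Y) \<le> card B + card Y"
      by (rule card_Un_le)
    also have "card B = card (X - \<sigma> ` T)"
      using bij by (rule bij_betw_same_card)
    also have "\<dots> \<le> card X"
      using assms(1,4) finite_subset by (intro card_mono) auto
    finally show "card (B \<union> Y) \<le> k"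
      using assms(6) by simp
  qed (fact assms(1))
  finally show ?thesis .
qed

lemma sum_add_sum_le_sum_best_k_sum:
  fixes a b :: "'a \<Rightarrow> real"
  assumes "finite A" and "T \<subseteq> A" and "card T = k"
    and "\<And>t u. t \<in> T \<Longrightarrow> u \<in> A - T \<Longrightarrow> b u \<le> b t"
    and "finite I" and "\<And>r. r \<in> I \<Longrightarrow> bij_betw (\<sigma> r) A A"
    and "disjoint_family_on (\<lambda>r. \<sigma> r ` T) I"
    and "X \<subseteq> A" and "Y \<subseteq> A" and "card X + card Y \<le> k"
    and "\<And>i. i \<in> A \<Longrightarrow> 0 \<le> a i" and "\<And>i. i \<in> A \<Longrightarrow> 0 \<le> b i"
  shows "(real (card I) - 1) * (sum a X + sum b Y)
    \<le> (\<Sum>r\<in>I. best_k_sum k A (\<lambda>i. if i \<in> T then b i else a (\<sigma> r i)))"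
proof -
  obtain Y' where Y': "Y' \<subseteq> T" "card Y' = card Y" "sum b Y \<le> sum b Y'"
    using sum_le_sum_subset_of_top[of A T b Y] assms(1-4,9,10) by auto
  have "(real (card I) - 1) * sum b Y \<le> real (card I) * sum b Y"
    using assms(9,12) by (simp add: algebra_simps subset_iff sum_nonneg)
  also have "\<dots> \<le> real (card I) * sum b Y'"
    using Y'(3) by (rule mult_left_mono) simp
  finally have "(real (card I) - 1) * sum b Y \<le> real (card I) * sum b Y'" .
  moreover have "(real (card I) - 1) * sum a X \<le> (\<Sum>r\<in>I. sum a (X - \<sigma> r ` T))"
    using assms(1,5,7,8,11) finite_subset by (intro sum_sum_Diff_disjoint_family_ge) auto
  ultimately have "(real (card I) - 1) * (sum a X + sum b Y)
      \<le> (\<Sum>r\<in>I. sum a (X - \<sigma> r ` T) + sum b Y')"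
    by (simp add: sum.distrib algebra_simps)
  also have "\<dots> \<le> (\<Sum>r\<in>I. best_k_sum k A (\<lambda>i. if i \<in> T then b i else a (\<sigma> r i)))"
  proof (rule sum_mono)
    fix r assume r: "r \<in> I"
    show "sum a (X - \<sigma> r ` T) + sum b Y' \<le> best_k_sum k A (\<lambda>i. if i \<in> T then b i else a (\<sigma> r i))"
      using sum_Diff_add_sum_le_best_k_sum[OF assms(1) assms(6)[OF r] assms(2) assms(8) Y'(1)]
        Y'(2) assms(10) by simp
  qed
  finally show ?thesis .
qed

lemma exists_permutations_with_disjoint_images:
  assumes "T \<subseteq> {..<n}" and "m * card T \<le> n"
  obtains \<sigma> where "\<And>r. r < m \<Longrightarrow> bij_betw (\<sigma> r) {..<n} {..<n}"
    and "disjoint_family_on (\<lambda>r. \<sigma> r ` T) {..<m}"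
proof -
  obtain R where R: "disjoint_family_on R {..<m}"
    "\<And>r. r < m \<Longrightarrow> R r \<subseteq> {..<n}" "\<And>r. r < m \<Longrightarrow> card (R r) = card T"
    using exists_disjoint_subsets_of_card[OF assms(2)] by metis
  have "\<forall>r\<in>{..<m}. \<exists>\<sigma>. bij_betw \<sigma> {..<n} {..<n} \<and> \<sigma> ` T = R r"
    using exists_bij_betw_image_eq[of "{..<n}" T] assms(1) R(2,3) by (metis finite_lessThan lessThan_iff)
  then obtain \<sigma> where "\<forall>r\<in>{..<m}. bij_betw (\<sigma> r) {..<n} {..<n} \<and> \<sigma> r ` T = R r"
    by (rule bchoice[elim_format]) blast
  then show ?thesis
    using that R(1) unfolding disjoint_family_on_def by (metis lessThan_iff)
qed

lemma nn_integral_le_of_average_measure_preserving: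
  fixes f g :: "'a \<Rightarrow> real"
  assumes "finite I" and "I \<noteq> {}"
    and "\<And>r. r \<in> I \<Longrightarrow> \<tau> r \<in> M \<rightarrow>\<^sub>M M" and "\<And>r. r \<in> I \<Longrightarrow> distr M M (\<tau> r) = M"
    and "g \<in> borel_measurable M" and "\<And>x. 0 \<le> g x" and "0 < c"
    and "AE x in M. c * f x \<le> (\<Sum>r\<in>I. g (\<tau> r x)) / real (card I)"
  shows "ennreal c * (\<integral>\<^sup>+x. ennreal (f x) \<partial>M) \<le> (\<integral>\<^sup>+x. ennreal (g x) \<partial>M)"
proof -
  have invariant: "(\<integral>\<^sup>+x. ennreal (g (\<tau> r x)) \<partial>M) = (\<integral>\<^sup>+x. ennreal (g x) \<partial>M)" if "r \<in> I" for r
    using nn_integral_distr[OF assms(3)[OF that], of "\<lambda>x. ennreal (g x)"] assms(4,5) that by simp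
  have "AE x in M. ennreal (f x)
      \<le> ennreal (1 / c) * ((\<Sum>r\<in>I. ennreal (g (\<tau> r x))) / of_nat (card I))"
  proof (rule eventually_mono[OF assms(8)])
    fix x assume "c * f x \<le> (\<Sum>r\<in>I. g (\<tau> r x)) / real (card I)"
    from mult_left_mono[OF this, of "1 / c"]
    have "ennreal (f x) \<le> ennreal (1 / c * ((\<Sum>r\<in>I. g (\<tau> r x)) / real (card I)))"
      using assms(7) by (intro ennreal_leI) simp
    also have "\<dots> = ennreal (1 / c) * (ennreal (\<Sum>r\<in>I. g (\<tau> r x)) / ennreal (real (card I)))"
      using assms(1,2,6,7) by (simp add: divide_ennreal sum_nonneg card_gt_0_iff flip: ennreal_mult)
    also have "\<dots> = ennreal (1 / c) * ((\<Sum>r\<in>I. ennreal (g (\<tau> r x))) / of_nat (card I))"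
      using assms(6) by (simp add: sum_ennreal ennreal_of_nat_eq_real_of_nat)
    finally show "ennreal (f x) \<le> ennreal (1 / c) * ((\<Sum>r\<in>I. ennreal (g (\<tau> r x))) / of_nat (card I))" .
  qed
  then have "(\<integral>\<^sup>+x. ennreal (f x) \<partial>M)
      \<le> (\<integral>\<^sup>+x. ennreal (1 / c) * ((\<Sum>r\<in>I. ennreal (g (\<tau> r x))) / of_nat (card I)) \<partial>M)"
    by (rule nn_integral_mono_AE)
  also have "\<dots> = ennreal (1 / c) * ((\<Sum>r\<in>I. \<integral>\<^sup>+x. ennreal (g (\<tau> r x)) \<partial>M) / of_nat (card I))"
    using assms(3,5) by (simp add: nn_integral_cmult nn_integral_divide nn_integral_sum)
  also have "\<dots> = ennreal (1 / c) * ((\<integral>\<^sup>+x. ennreal (g x) \<partial>M) * of_nat (card I) / of_nat (card I))"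
    by (simp add: invariant mult.commute[of "of_nat (card I)"])
  also have "\<dots> = ennreal (1 / c) * (\<integral>\<^sup>+x. ennreal (g x) \<partial>M)"
    using assms(1,2) by (simp add: mult_divide_eq_ennreal)
  finally have "ennreal c * (\<integral>\<^sup>+x. ennreal (f x) \<partial>M)
      \<le> (ennreal c * ennreal (1 / c)) * (\<integral>\<^sup>+x. ennreal (g x) \<partial>M)"
    by (simp add: mult_left_mono mult.assoc)
  also have "ennreal c * ennreal (1 / c) = 1"
    using assms(7) by (simp flip: ennreal_mult)
  finally show ?thesis
    by simp
qed

lemma
  assumes "prob_space D" and "bij_betw \<sigma> {..<n} {..<n}"
  shows measurable_prof_dist_permute:
      "(\<lambda>a. \<lambda>j\<in>{..<n}. a (\<sigma> j)) \<in> prof_dist D n \<rightarrow>\<^sub>M prof_dist D n"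
    and distr_prof_dist_permute:
      "distr (prof_dist D n) (prof_dist D n) (\<lambda>a. \<lambda>j\<in>{..<n}. a (\<sigma> j)) = prof_dist D n"
proof -
  have "\<sigma> \<in> {..<n} \<rightarrow> {..<n}"
    using assms(2) by (rule bij_betw_imp_funcset)
  then show "(\<lambda>a. \<lambda>j\<in>{..<n}. a (\<sigma> j)) \<in> prof_dist D n \<rightarrow>\<^sub>M prof_dist D n"
    unfolding prof_dist_def by (intro measurable_restrict measurable_component_singleton) auto
  show "distr (prof_dist D n) (prof_dist D n) (\<lambda>a. \<lambda>j\<in>{..<n}. a (\<sigma> j)) = prof_dist D n"
    using distr_PiM_reindex[of "{..<n}" "\<lambda>_. D" \<sigma> "{..<n}"] assms \<open>\<sigma> \<in> {..<n} \<rightarrow> {..<n}\<close>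
    unfolding prof_dist_def by (simp add: bij_betw_imp_inj_on)
qed

lemma AE_prof_dist_nonneg:
  assumes "prob_space D" and "AE v in D. 0 \<le> v"
  shows "AE a in prof_dist D n. \<forall>i<n. 0 \<le> a i"
proof -
  interpret product_prob_space "\<lambda>_. D" "{..<n}"
    using assms(1) by (simp add: product_prob_space_def product_prob_space_axioms_def
        product_sigma_finite_def prob_space_imp_sigma_finite)
  have "AE a in prof_dist D n. \<forall>i\<in>{..<n}. 0 \<le> a i"
    unfolding prof_dist_def using assms(2) by (intro AE_finite_allI AE_component) auto
  then show ?thesis
    by (rule eventually_mono) simp
qed

lemma nn_integral_best_k_sum_le_fix_obj:
  assumes "prob_space D" and "AE v in D. 0 \<le> v" and "\<forall>i<n. 0 \<le> ov i"
  shows "(\<integral>\<^sup>+a. ennreal (best_k_sum k {..<n} (\<lambda>i. if i \<in> I then ov i else a i)) \<partial>prof_dist D n)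
    \<le> fix_obj D n k ov I"
  unfolding fix_obj_def
proof (intro nn_integral_mono_AE, rule eventually_mono[OF AE_prof_dist_nonneg[OF assms(1,2)]])
  fix a :: "nat \<Rightarrow> real"
  assume "\<forall>i<n. 0 \<le> a i"
  then show "ennreal (best_k_sum k {..<n} (\<lambda>i. if i \<in> I then ov i else a i))
    \<le> ennreal (max_k k (image_mset (\<lambda>i. if i \<in> I then ov i else a i) (mset_set {..<n})))"
    using assms(3) by (intro ennreal_leI best_k_sum_le_max_k) auto
qed

lemma fix_obj_le_gfix_obj:
  assumes "I \<subseteq> {..<n}" and "card I \<le> k"
  shows "fix_obj D n k ov I \<le> gfix_obj D n k ov"
proof -
  have "{fix_obj D n k ov I | I. I \<subseteq> {..<n} \<and> card I \<le> k} \<subseteq> fix_obj D n k ov ` Pow {..<n}"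
    by blast
  then show ?thesis
    unfolding gfix_obj_def using assms by (intro Max_ge) (auto intro: finite_surj)
qed

lemma feasible_mech_card_le:
  assumes "feasible_mech n k x y" and "a \<in> PiE {..<n} (\<lambda>_. UNIV)"
  shows "card {i\<in>{..<n}. x a i} + card {i\<in>{..<n}. y a i} \<le> k"
proof -
  have "(\<Sum>i<n. of_bool (x a i) + of_bool (y a i)) \<le> k"
    using assms unfolding feasible_mech_def by blast
  then show ?thesis
    by (simp add: sum.distrib Int_def)
qed

lemma borel_measurable_prof_dist_component:
  assumes "sets D = sets borel" and "i < n"
  shows "(\<lambda>a. a i) \<in> borel_measurable (prof_dist D n)"
proof -
  have "(\<lambda>a. a i) \<in> prof_dist D n \<rightarrow>\<^sub>M D"
    unfolding prof_dist_def using assms(2) by (intro measurable_component_singleton) auto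
  then show ?thesis
    using measurable_cong_sets[OF refl assms(1)] by blast
qed

lemma exists_block_count:
  assumes "0 < \<epsilon>" and "(real k)^2 / \<epsilon> + real k \<le> real n"
  obtains m where "0 < m" and "m * k \<le> n" and "1 \<le> \<epsilon> * real m"
proof -
  obtain m where "m * k \<le> n" and "1 \<le> \<epsilon> * real m"
  proof (cases "k = 0")
    case True
    have "1 = \<epsilon> * (1 / \<epsilon>)"
      using assms(1) by simp
    also have "\<dots> \<le> \<epsilon> * real (nat \<lceil>1 / \<epsilon>\<rceil>)"
      using assms(1) by (intro mult_left_mono) linarith+
    finally show ?thesis
      using that True by simp
  next
    case False
    have "n < k + k * (n div k)"
      using False by (simp add: dividend_less_times_div)
    then have "(real k)^2 / \<epsilon> < real k * real (n div k)"
      using assms(2) by (simp flip: of_nat_add of_nat_mult)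
    then have "real k * real k < real k * (\<epsilon> * real (n div k))"
      using assms(1) by (simp add: power2_eq_square divide_less_eq algebra_simps)
    then have "1 \<le> \<epsilon> * real (n div k)"
      using False by (simp add: mult_less_cancel_left_pos)
    moreover have "n div k * k \<le> n"
      by (rule div_times_less_eq_dividend)
    ultimately show ?thesis
      using that by blast
  qed
  moreover from this have "0 < m"
    by (cases "m = 0") simp_all
  ultimately show ?thesis
    using that by blast
qed

lemma mech_value_le_sum_best_k_sum:
  assumes "feasible_mech n k x y" and "a \<in> PiE {..<n} (\<lambda>_. UNIV)"
    and "\<forall>i<n. 0 \<le> a i" and "\<forall>i<n. 0 \<le> ov i"
    and "T \<subseteq> {..<n}" and "card T = k" and "\<And>t u. t \<in> T \<Longrightarrow> u \<in> {..<n} - T \<Longrightarrow> ov u \<le> ov t"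
    and "\<And>r. r < m \<Longrightarrow> bij_betw (\<sigma> r) {..<n} {..<n}" and "disjoint_family_on (\<lambda>r. \<sigma> r ` T) {..<m}"
  shows "(real m - 1) * (\<Sum>i<n. (if x a i then a i else 0) + (if y a i then ov i else 0))
    \<le> (\<Sum>r<m. best_k_sum k {..<n} (\<lambda>i. if i \<in> T then ov i else a (\<sigma> r i)))"
proof -
  define X where "X = {i\<in>{..<n}. x a i}"
  define Y where "Y = {i\<in>{..<n}. y a i}"
  have "(\<Sum>i<n. (if x a i then a i else 0) + (if y a i then ov i else 0)) = sum a X + sum ov Y"
    unfolding X_def Y_def by (simp only: sum.distrib sum.inter_filter[OF finite_lessThan])
  moreover have "card X + card Y \<le> k"
    unfolding X_def Y_def using assms(1,2) by (rule feasible_mech_card_le)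
  ultimately show ?thesis
    using sum_add_sum_le_sum_best_k_sum[of "{..<n}" T k ov "{..<m}" \<sigma> X Y a] assms(3-9)
    unfolding X_def Y_def by auto
qed

lemma mech_obj_le_fix_obj_top:
  assumes "prob_space D" and "sets D = sets borel" and "AE v in D. 0 \<le> v"
    and "feasible_mech n k x y" and "\<forall>i<n. 0 \<le> ov i"
    and "T \<subseteq> {..<n}" and "card T = k" and "\<And>t u. t \<in> T \<Longrightarrow> u \<in> {..<n} - T \<Longrightarrow> ov u \<le> ov t"
    and "0 < m" and "m * k \<le> n" and "1 \<le> \<epsilon> * real m" and "\<epsilon> < 1"
  shows "ennreal (1 - \<epsilon>) * mech_obj D n ov x y \<le> fix_obj D n k ov T"
proof -
  define V where "V a = (\<Sum>i<n. (if x a i then a i else 0) + (if y a i then ov i else 0))"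
    for a :: "nat \<Rightarrow> real"
  define G where "G a = best_k_sum k {..<n} (\<lambda>i. if i \<in> T then ov i else a i)" for a :: "nat \<Rightarrow> real"
  obtain \<sigma> where \<sigma>: "\<And>r. r < m \<Longrightarrow> bij_betw (\<sigma> r) {..<n} {..<n}"
    "disjoint_family_on (\<lambda>r. \<sigma> r ` T) {..<m}"
    using exists_permutations_with_disjoint_images[OF assms(6)] assms(7,10) by blast
  define \<tau> where "\<tau> r = (\<lambda>a :: nat \<Rightarrow> real. \<lambda>j\<in>{..<n}. a (\<sigma> r j))" for r
  have G_measurable: "G \<in> borel_measurable (prof_dist D n)"
    unfolding G_def using borel_measurable_prof_dist_component[OF assms(2)]
    by (intro borel_measurable_best_k_sum) auto
  have G_nonneg: "0 \<le> G a" for a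
    unfolding G_def by (rule best_k_sum_nonneg) simp
  have G_\<tau>: "G (\<tau> r a) = best_k_sum k {..<n} (\<lambda>i. if i \<in> T then ov i else a (\<sigma> r i))" for r a
    unfolding G_def \<tau>_def by (rule best_k_sum_cong) simp
  have factor: "(1 - \<epsilon>) * real m \<le> real m - 1"
    using assms(11) by (simp add: algebra_simps)
  have bound: "AE a in prof_dist D n. (1 - \<epsilon>) * V a \<le> (\<Sum>r\<in>{..<m}. G (\<tau> r a)) / real (card {..<m})"
    using AE_prof_dist_nonneg[OF assms(1,3)] AE_space
  proof eventually_elim
    case (elim a)
    have a: "a \<in> PiE {..<n} (\<lambda>_. UNIV)"
      using elim(2) by (simp add: prof_dist_def space_PiM sets_eq_imp_space_eq[OF assms(2)])
    have "(real m - 1) * V a \<le> (\<Sum>r<m. G (\<tau> r a))"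
      unfolding V_def G_\<tau> by (rule mech_value_le_sum_best_k_sum[OF assms(4) a elim(1) assms(5-8) \<sigma>])
    moreover have "0 \<le> V a"
      using elim(1) assms(5) unfolding V_def by (auto intro!: sum_nonneg add_nonneg_nonneg)
    ultimately have "(1 - \<epsilon>) * real m * V a \<le> (\<Sum>r<m. G (\<tau> r a))"
      using factor by (meson mult_right_mono order_trans)
    then show ?case
      using assms(9) by (simp add: field_simps)
  qed
  have "ennreal (1 - \<epsilon>) * mech_obj D n ov x y \<le> (\<integral>\<^sup>+a. ennreal (G a) \<partial>prof_dist D n)"
    unfolding mech_obj_def V_def[symmetric] using assms(1,9,12) \<sigma>(1) G_measurable G_nonneg
    by (intro nn_integral_le_of_average_measure_preserving[where f = V and \<tau> = \<tau>, OF _ _ _ _ _ _ _ bound])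
      (auto simp: \<tau>_def measurable_prof_dist_permute distr_prof_dist_permute)
  also have "\<dots> \<le> fix_obj D n k ov T"
    unfolding G_def using assms(1,3,5) by (rule nn_integral_best_k_sum_le_fix_obj)
  finally show ?thesis .
qed

theorem theorem4:
  fixes D :: "real measure" and n k :: nat and \<epsilon> :: real and ov :: "nat \<Rightarrow> real"
  assumes "prob_space D"
    and "sets D = sets borel"
    and "AE v in D. 0 \<le> v"
    and "regular_dist D"
    and "k \<le> n"
    and "0 < \<epsilon>" and "\<epsilon> < 1"
    and "real n \<ge> (real k)^2 / \<epsilon> + real k"
    and "\<forall>i<n. 0 \<le> ov i"
  shows "gfix_obj D n k ov \<ge> ennreal (1 - \<epsilon>) * opt_obj D n k ov"
proof -
  obtain T where T: "T \<subseteq> {..<n}" "card T = k" "\<And>t u. t \<in> T \<Longrightarrow> u \<in> {..<n} - T \<Longrightarrow> ov u \<le> ov t"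
    using exists_top_subset[of "{..<n}" k ov] assms(5) by auto
  obtain m where m: "0 < m" "m * k \<le> n" "1 \<le> \<epsilon> * real m"
    using exists_block_count[OF assms(6,8)] .
  have "ennreal (1 - \<epsilon>) * opt_obj D n k ov \<le> fix_obj D n k ov T"
    unfolding opt_obj_def SUP_mult_left_ennreal
    using mech_obj_le_fix_obj_top[OF assms(1-3) _ assms(9) T m assms(7)] by (auto intro!: SUP_least)
  also have "\<dots> \<le> gfix_obj D n k ov"
    using T(1) by (rule fix_obj_le_gfix_obj) (simp add: T(2))
  finally show ?thesis .
qed

end
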